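(* Let $E$ and $H$ be finite directed graphs and let $\xi^{0},\xi^{1}:H\to E$ be an embedding pair, with associated self-similar groupoid action $(G_{\xi},E)$. Then, on $E^{-\infty}$, the equivalence relation $\sim_{\xi}$ is equal to the asymptotic equivalence relation $\sim_{ae}$ of $(G_{\xi},E)$. Consequently $(\sigma_{\xi},\mathcal{J}_{\xi})=(\tilde{\sigma},\mathcal{J}_{G_{\xi},E})$.
   Context: A directed graph $E=(E^0,E^1,r,s)$ has vertices $E^0$, edges $E^1$, range and source maps $r,s:E^1\to E^0$. A finite path of length $n$ is $\mu=\mu_1\cdots\mu_n$ with $s(\mu_i)=r(\mu_{i+1})$; vertices are paths of length $0$; $E^*$ is the set of finite paths, $r(\mu)=r(\mu_1)$, $s(\mu)=s(\mu_n)$, and $vE^*$ denotes paths with range $v$. $E^{-\infty}$ is the set of left-infinite paths $\mu=\cdots\mu_{-2}\mu_{-1}$ (edges with $s(\mu_i)=r(\mu_{i+1})$), with the product topology, and the shift $\sigma:E^{-\infty}\to E^{-\infty}$ is $\sigma(\cdots\mu_{-3}\mu_{-2}\mu_{-1})=\cdots\mu_{-3}\mu_{-2}$. An embedding pair consists of two injective graph homomorphisms $\xi^0,\xi^1:H\to E$ with $\xi^0|_{H^0}=\xi^1|_{H^0}$ and $\xi^0(H^1)\cap\xi^1(H^1)=\emptyset$. Put $H^0_\xi=\xi^0(H^0)$ and $H^1_\xi=\xi^0(H^1)\cup\xi^1(H^1)$. The groupoid $\tilde G_\xi=\mathbb{Z}\times E^0$ is the group bundle where $(m,v),(n,w)$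 are composable iff $v=w$, with $(m,v)(n,v)=(m+n,v)$, and domain = codomain = $v$. For $(m,v)$ and $e\in vE^1$ define: if $e\notin H^1_\xi$, $(m,v)\cdot e=e$ and $(m,v)|_e=(0,s(e))$; if $e=\xi^i(h)$ with $h\in H^1$, $i\in\{0,1\}$, write $m+i=2n+j$ with $j\in\{0,1\}$, $n\in\mathbb{Z}$, and set $(m,v)\cdot e=\xi^j(h)$, $(m,v)|_e=(n,s(e))$. This extends recursively to an action on finite paths by $g\cdot(e\nu)=(g\cdot e)(g|_e\cdot\nu)$ with $g|_{e\nu}=(g|_e)|_\nu$. $G_\xi$ is the quotient of $\tilde G_\xi$ by the elements acting trivially on $E^*$; it acts faithfully and self-similarly on $E^*$ (restrictions descend), giving the self-similar groupoid action $(G_\xi,E)$. Asymptotic equivalence: for $\mu,\nu\in E^{-\infty}$, $\mu\sim_{ae}\nu$ iff there are a finite set $F\subseteq G_\xi$ and $(g_n)_{n<0}\subseteq F$ with $d(g_n)=r(\mu_n)$ and $g_n\cdot\mu_n\cdots\mu_{-1}=\nu_n\cdots\nu_{-1}$ for all $n<0$. The limit space $\mathcal{J}_{G_\xi,E}=E^{-\infty}/\sim_{ae}$ (quotient topology) with $\tilde\sigma$ induced by $\sigma$. The relation $\sim_\xi$: $\mu\sim_\xi\nu$ iff $\mu=\nu$, or there are $n<0$, $i\in\{0,1\}$ and $(y_k)_{k\le n}\subseteq H^1$ with $\mu_k=\xi^i(y_k)$ and $\nu_k=\xi^{1-i}(y_k)$ for all $k\le n$, and one of: (1) $n=-1$;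 (2) $n<-1$, $\mu_j=\nu_j$ for all $j>n+1$, and there is $y_{n+1}\in H^1$ with $\mu_{n+1}=\xi^{1-i}(y_{n+1})$, $\nu_{n+1}=\xi^i(y_{n+1})$; (3) $n<-1$, $\mu_j=\nu_j$ for all $j\ge n+1$, and $\mu_{n+1}=\nu_{n+1}\notin H^1_\xi$. $\mathcal{J}_\xi=E^{-\infty}/\sim_\xi$ with $\sigma_\xi$ induced by $\sigma$. *)

theory Defs
  imports Main
begin

definition dgraph :: "'v set \<Rightarrow> 'e set \<Rightarrow> ('e \<Rightarrow> 'v) \<Rightarrow> ('e \<Rightarrow> 'v) \<Rightarrow> bool" where
  "dgraph V Ed r s \<longleftrightarrow> (\<forall>e\<in>Ed. r e \<in> V \<and> s e \<in> V)"

definition finite_dgraph :: "'v set \<Rightarrow> 'e set \<Rightarrow> ('e \<Rightarrow> 'v) \<Rightarrow> ('e \<Rightarrow> 'v) \<Rightarrow> bool" where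
  "finite_dgraph V Ed r s \<longleftrightarrow> dgraph V Ed r s \<and> finite V \<and> finite Ed"

definition inj_graph_hom ::
  "'w set \<Rightarrow> 'f set \<Rightarrow> ('f \<Rightarrow> 'w) \<Rightarrow> ('f \<Rightarrow> 'w) \<Rightarrow>
   'v set \<Rightarrow> 'e set \<Rightarrow> ('e \<Rightarrow> 'v) \<Rightarrow> ('e \<Rightarrow> 'v) \<Rightarrow>
   ('w \<Rightarrow> 'v) \<Rightarrow> ('f \<Rightarrow> 'e) \<Rightarrow> bool" where
  "inj_graph_hom H0 H1 rH sH E0 E1 r s phi0 phi1 \<longleftrightarrow>
     phi0 ` H0 \<subseteq> E0 \<and> phi1 ` H1 \<subseteq> E1 \<and>
     (\<forall>h\<in>H1. r (phi1 h) = phi0 (rH h) \<and> s (phi1 h) = phi0 (sH h)) \<and>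
     inj_on phi0 H0 \<and> inj_on phi1 H1"

definition embedding_pair ::
  "'w set \<Rightarrow> 'f set \<Rightarrow> ('f \<Rightarrow> 'w) \<Rightarrow> ('f \<Rightarrow> 'w) \<Rightarrow>
   'v set \<Rightarrow> 'e set \<Rightarrow> ('e \<Rightarrow> 'v) \<Rightarrow> ('e \<Rightarrow> 'v) \<Rightarrow>
   ('w \<Rightarrow> 'v) \<Rightarrow> ('f \<Rightarrow> 'e) \<Rightarrow> ('w \<Rightarrow> 'v) \<Rightarrow> ('f \<Rightarrow> 'e) \<Rightarrow> bool" where
  "embedding_pair H0 H1 rH sH E0 E1 r s x0v x0e x1v x1e \<longleftrightarrow>
     inj_graph_hom H0 H1 rH sH E0 E1 r s x0v x0e \<and>
     inj_graph_hom H0 H1 rH sH E0 E1 r s x1v x1e \<and>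
     (\<forall>w\<in>H0. x0v w = x1v w) \<and>
     x0e ` H1 \<inter> x1e ` H1 = {}"

definition xi_sel :: "nat \<Rightarrow> ('f \<Rightarrow> 'e) \<Rightarrow> ('f \<Rightarrow> 'e) \<Rightarrow> 'f \<Rightarrow> 'e" where
  "xi_sel i x0e x1e = (if i = 0 then x0e else x1e)"

definition H1xi :: "'f set \<Rightarrow> ('f \<Rightarrow> 'e) \<Rightarrow> ('f \<Rightarrow> 'e) \<Rightarrow> 'e set" where
  "H1xi H1 x0e x1e = x0e ` H1 \<union> x1e ` H1"

(* One step of the action of (m, r e) in Z x E^0 on an edge e:
   returns (m,v).e together with the restriction (m,v)|_e. *)
definition edge_act ::
  "'f set \<Rightarrow> ('f \<Rightarrow> 'e) \<Rightarrow> ('f \<Rightarrow> 'e) \<Rightarrow> ('e \<Rightarrow> 'v) \<Rightarrow> int \<Rightarrow> 'e \<Rightarrow> 'e \<times> (int \<times> 'v)" where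
  "edge_act H1 x0e x1e s m e =
    (if e \<in> H1xi H1 x0e x1e then
       (let ih = (THE ih. fst ih \<in> {0,1} \<and> snd ih \<in> H1 \<and> e = xi_sel (fst ih) x0e x1e (snd ih));
            i = fst ih; h = snd ih
        in (xi_sel (nat ((m + int i) mod 2)) x0e x1e h, ((m + int i) div 2, s e)))
     else (e, (0, s e)))"

fun path_act ::
  "'f set \<Rightarrow> ('f \<Rightarrow> 'e) \<Rightarrow> ('f \<Rightarrow> 'e) \<Rightarrow> ('e \<Rightarrow> 'v) \<Rightarrow> int \<times> 'v \<Rightarrow> 'e list \<Rightarrow> 'e list" where
  "path_act H1 x0e x1e s g [] = []"
| "path_act H1 x0e x1e s g (e # p) =
     (let (e', g') = edge_act H1 x0e x1e s (fst g) e in e' # path_act H1 x0e x1e s g' p)"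

definition fpath :: "'e set \<Rightarrow> ('e \<Rightarrow> 'v) \<Rightarrow> ('e \<Rightarrow> 'v) \<Rightarrow> 'e list \<Rightarrow> bool" where
  "fpath E1 r s p \<longleftrightarrow> set p \<subseteq> E1 \<and> (\<forall>i. Suc i < length p \<longrightarrow> s (p ! i) = r (p ! Suc i))"

(* Elements of the group bundle Z x E^0 acting trivially on E^*
   (vertex paths are always fixed, so only paths of positive length matter). *)
definition triv_elems ::
  "'v set \<Rightarrow> 'e set \<Rightarrow> ('e \<Rightarrow> 'v) \<Rightarrow> ('e \<Rightarrow> 'v) \<Rightarrow> 'f set \<Rightarrow> ('f \<Rightarrow> 'e) \<Rightarrow> ('f \<Rightarrow> 'e) \<Rightarrow> (int \<times> 'v) set" where
  "triv_elems E0 E1 r s H1 x0e x1e =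
     {(m, v). v \<in> E0 \<and> (\<forall>p. fpath E1 r s p \<and> p \<noteq> [] \<and> r (hd p) = v \<longrightarrow> path_act H1 x0e x1e s (m, v) p = p)}"

(* The class of g in the quotient groupoid G_xi (coset of the trivially acting subgroupoid) *)
definition Gxi_class ::
  "'v set \<Rightarrow> 'e set \<Rightarrow> ('e \<Rightarrow> 'v) \<Rightarrow> ('e \<Rightarrow> 'v) \<Rightarrow> 'f set \<Rightarrow> ('f \<Rightarrow> 'e) \<Rightarrow> ('f \<Rightarrow> 'e) \<Rightarrow> int \<times> 'v \<Rightarrow> (int \<times> 'v) set" where
  "Gxi_class E0 E1 r s H1 x0e x1e g =
     {(fst g + k, snd g) | k. (k, snd g) \<in> triv_elems E0 E1 r s H1 x0e x1e}"

definition Gxi ::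
  "'v set \<Rightarrow> 'e set \<Rightarrow> ('e \<Rightarrow> 'v) \<Rightarrow> ('e \<Rightarrow> 'v) \<Rightarrow> 'f set \<Rightarrow> ('f \<Rightarrow> 'e) \<Rightarrow> ('f \<Rightarrow> 'e) \<Rightarrow> (int \<times> 'v) set set" where
  "Gxi E0 E1 r s H1 x0e x1e = Gxi_class E0 E1 r s H1 x0e x1e ` (UNIV \<times> E0)"

definition Gxi_dom :: "(int \<times> 'v) set \<Rightarrow> 'v" where
  "Gxi_dom c = snd (SOME g. g \<in> c)"

definition Gxi_act ::
  "'f set \<Rightarrow> ('f \<Rightarrow> 'e) \<Rightarrow> ('f \<Rightarrow> 'e) \<Rightarrow> ('e \<Rightarrow> 'v) \<Rightarrow> (int \<times> 'v) set \<Rightarrow> 'e list \<Rightarrow> 'e list" where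
  "Gxi_act H1 x0e x1e s c p = path_act H1 x0e x1e s (SOME g. g \<in> c) p"

(* Left-infinite paths ... mu_{-2} mu_{-1}, indexed by negative integers;
   values at nonnegative indices are fixed to undefined so that equality of
   functions is equality of paths. *)
definition Eneg :: "'e set \<Rightarrow> ('e \<Rightarrow> 'v) \<Rightarrow> ('e \<Rightarrow> 'v) \<Rightarrow> (int \<Rightarrow> 'e) set" where
  "Eneg E1 r s = {mu. (\<forall>k<0. mu k \<in> E1) \<and> (\<forall>k< -1. s (mu k) = r (mu (k + 1))) \<and> (\<forall>k\<ge>0. mu k = undefined)}"

definition ae_rel ::
  "'v set \<Rightarrow> 'e set \<Rightarrow> ('e \<Rightarrow> 'v) \<Rightarrow> ('e \<Rightarrow> 'v) \<Rightarrow> 'f set \<Rightarrow> ('f \<Rightarrow> 'e) \<Rightarrow> ('f \<Rightarrow> 'e) \<Rightarrow> ((int \<Rightarrow> 'e) \<times> (int \<Rightarrow> 'e)) set" where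
  "ae_rel E0 E1 r s H1 x0e x1e =
     {(mu, nu). mu \<in> Eneg E1 r s \<and> nu \<in> Eneg E1 r s \<and>
        (\<exists>F g. F \<subseteq> Gxi E0 E1 r s H1 x0e x1e \<and> finite F \<and>
           (\<forall>n<0. g n \<in> F \<and> Gxi_dom (g n) = r (mu n) \<and>
              Gxi_act H1 x0e x1e s (g n) (map mu [n..-1]) = map nu [n..-1]))}"

definition xi_rel ::
  "'e set \<Rightarrow> ('e \<Rightarrow> 'v) \<Rightarrow> ('e \<Rightarrow> 'v) \<Rightarrow> 'f set \<Rightarrow> ('f \<Rightarrow> 'e) \<Rightarrow> ('f \<Rightarrow> 'e) \<Rightarrow> ((int \<Rightarrow> 'e) \<times> (int \<Rightarrow> 'e)) set" where
  "xi_rel E1 r s H1 x0e x1e =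
     {(mu, nu). mu \<in> Eneg E1 r s \<and> nu \<in> Eneg E1 r s \<and>
        (mu = nu \<or>
         (\<exists>n::int. \<exists>i::nat. \<exists>y::int \<Rightarrow> 'f. n < 0 \<and> i \<in> {0,1} \<and>
            (\<forall>k\<le>n. y k \<in> H1 \<and> mu k = xi_sel i x0e x1e (y k) \<and> nu k = xi_sel (1 - i) x0e x1e (y k)) \<and>
            (n = -1 \<or>
             (n < -1 \<and> (\<forall>j. n + 1 < j \<and> j < 0 \<longrightarrow> mu j = nu j) \<and>
                (\<exists>y'\<in>H1. mu (n+1) = xi_sel (1 - i) x0e x1e y' \<and> nu (n+1) = xi_sel i x0e x1e y')) \<or>
             (n < -1 \<and> (\<forall>j. n + 1 \<le> j \<and> j < 0 \<longrightarrow> mu j = nu j) \<and>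
                mu (n+1) \<notin> H1xi H1 x0e x1e))))}"

end

theory Submission
  imports Defs
begin

(* An element (m, v) acts on a path like adding m to a binary number whose digits, least
   significant first, are the indices i of the edges \<xi>\<^sup>i(h); an edge outside H\<^sup>1\<^sub>\<xi> resets
   the carry to 0. So \<mu> \<sim>\<^sub>a\<^sub>e \<nu> means that every tail of \<mu> is carried onto the
   corresponding tail of \<nu> by an integer of uniformly bounded size. Each edge of H\<^sup>1\<^sub>\<xi> halves
   the carry, so the bound may be taken to be 1. Below the last position where \<mu> and \<nu>
   differ such a carry is \<plusminus>1 with a fixed sign: it turns an infinite run of digits i
   into digits 1 - i, and is then absorbed by a digit 1 - i, killed by an edge outside
   H\<^sup>1\<^sub>\<xi>, or runs off the end of the path. These are the three clauses of \<sim>\<^sub>\<xi>. *)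

lemma last_difference:
  fixes mu nu :: "int \<Rightarrow> 'a"
  assumes "mu \<noteq> nu" "\<forall>k\<ge>0. mu k = nu k"
  obtains t where "t < 0" "mu t \<noteq> nu t" "\<forall>j>t. mu j = nu j"
proof -
  obtain k where k: "mu k \<noteq> nu k" using assms(1) by blast
  then have "k < 0" using assms(2) not_le by blast
  define D where "D = {k..0} \<inter> {j. mu j \<noteq> nu j}"
  have "finite D" "k \<in> D" using k \<open>k < 0\<close> by (auto simp: D_def)
  then have t: "Max D \<in> D" "\<forall>j\<in>D. j \<le> Max D" by (auto intro: Max_in)
  show ?thesis
  proof (rule that)
    show "mu (Max D) \<noteq> nu (Max D)" using t(1) by (simp add: D_def)
    then show "Max D < 0" using assms(2) not_le by blast
    show "\<forall>j>Max D. mu j = nu j"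
    proof (intro allI impI)
      fix j assume "Max D < j"
      moreover have "k \<le> Max D" using t(2) \<open>k \<in> D\<close> by blast
      ultimately show "mu j = nu j"
      proof (cases "0 \<le> j")
        case False
        with \<open>Max D < j\<close> \<open>k \<le> Max D\<close> have "j \<in> {k..0}" by simp
        with t(2) \<open>Max D < j\<close> show ?thesis unfolding D_def by (meson IntI mem_Collect_eq not_le)
      qed (use assms(2) in blast)
    qed
  qed
qed

lemma Eneg_tail_fpath:
  assumes "mu \<in> Eneg E1 r s"
  shows "fpath E1 r s (map mu [n..-1])"
  using assms by (auto simp: Eneg_def fpath_def nth_upto algebra_simps)

locale edge_embedding_pair =
  fixes H1 :: "'f set" and x0e x1e :: "'f \<Rightarrow> 'e" and s :: "'e \<Rightarrow> 'v"
  assumes inj_x0e: "inj_on x0e H1" and inj_x1e: "inj_on x1e H1"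
    and disjoint_images: "x0e ` H1 \<inter> x1e ` H1 = {}"
begin

abbreviation X :: "nat \<Rightarrow> 'f \<Rightarrow> 'e" where "X i \<equiv> xi_sel i x0e x1e"
abbreviation HX :: "'e set" where "HX \<equiv> H1xi H1 x0e x1e"

lemma xi_sel_inject:
  assumes "i \<in> {0,1}" "h \<in> H1" "i' \<in> {0,1}" "h' \<in> H1" "X i h = X i' h'"
  shows "i = i' \<and> h = h'"
  using assms inj_x0e inj_x1e disjoint_images unfolding xi_sel_def
  by (auto split: if_splits dest: inj_onD)

lemma xi_sel_in_H1xi: "h \<in> H1 \<Longrightarrow> X i h \<in> HX"
  by (auto simp: xi_sel_def H1xi_def)

lemma H1xi_cases:
  obtains (xi_sel) i h where "i \<in> {0,1}" "h \<in> H1" "e = X i h"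
    | (other) "e \<notin> HX"
proof (cases "e \<in> HX")
  case True
  then consider h where "h \<in> H1" "e = X 0 h" | h where "h \<in> H1" "e = X 1 h"
    unfolding H1xi_def xi_sel_def by auto
  then show ?thesis using xi_sel by (metis insertCI)
qed (rule other)

lemma the_xi_sel_decode:
  assumes "i \<in> {0,1}" "h \<in> H1"
  shows "(THE ih. fst ih \<in> {0,1} \<and> snd ih \<in> H1 \<and> X i h = X (fst ih) (snd ih)) = (i, h)"
proof (rule the_equality)
  fix ih :: "nat \<times> 'f"
  assume "fst ih \<in> {0,1} \<and> snd ih \<in> H1 \<and> X i h = X (fst ih) (snd ih)"
  then show "ih = (i, h)" using xi_sel_inject[OF assms] by (cases ih) auto
qed (use assms in auto)

lemma edge_act_xi_sel:
  assumes "i \<in> {0,1}" "h \<in> H1"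
  shows "edge_act H1 x0e x1e s m (X i h) = (X (nat ((m + int i) mod 2)) h, ((m + int i) div 2, s (X i h)))"
  using the_xi_sel_decode[OF assms] xi_sel_in_H1xi[OF assms(2)]
  unfolding edge_act_def by (simp add: Let_def)

lemma edge_act_other: "e \<notin> HX \<Longrightarrow> edge_act H1 x0e x1e s m e = (e, (0, s e))"
  by (simp add: edge_act_def)

text \<open>Only the integer part of an element of \<open>\<int> \<times> E\<^sup>0\<close> matters for the action,
  so we work with the induced action \<open>act m\<close> of \<open>\<int>\<close> on edge lists.\<close>

definition act :: "int \<Rightarrow> 'e list \<Rightarrow> 'e list" where
  "act m p = path_act H1 x0e x1e s (m, undefined) p"

lemma path_act_vertex_irrelevant:
  "path_act H1 x0e x1e s (m, v) p = path_act H1 x0e x1e s (m, w) p"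
  by (induction p arbitrary: m v w) (auto split: prod.splits)

lemma path_act_eq_act: "path_act H1 x0e x1e s g p = act (fst g) p"
  unfolding act_def by (cases g) (metis fst_conv path_act_vertex_irrelevant)

lemma act_Nil [simp]: "act m [] = []"
  by (simp add: act_def)

lemma act_xi_sel [simp]:
  assumes "i \<in> {0,1}" "h \<in> H1"
  shows "act m (X i h # p) = X (nat ((m + int i) mod 2)) h # act ((m + int i) div 2) p"
  using edge_act_xi_sel[OF assms, of m] path_act_vertex_irrelevant[of _ "s (X i h)" p undefined]
  by (simp add: act_def)

lemma act_other [simp]: "e \<notin> HX \<Longrightarrow> act m (e # p) = e # act 0 p"
  using edge_act_other[of e m] path_act_vertex_irrelevant[of 0 "s e" p undefined]
  by (simp add: act_def)

lemma act_0 [simp]: "act 0 p = p"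
proof (induction p)
  case (Cons e p)
  then show ?case by (cases e rule: H1xi_cases) auto
qed simp

lemma length_act [simp]: "length (act m p) = length p"
proof (induction p arbitrary: m)
  case (Cons e p)
  then show ?case by (cases e rule: H1xi_cases) auto
qed simp

lemma act_add: "act (m + k) p = act m (act k p)"
proof (induction p arbitrary: m k)
  case (Cons e p)
  show ?case
  proof (cases e rule: H1xi_cases)
    case (xi_sel i h)
    define q where "q = (k + int i) div 2"
    define j where "j = nat ((k + int i) mod 2)"
    have j: "j \<in> {0,1}" unfolding j_def by auto
    have sum: "m + k + int i = (m + int j) + q * 2"
      unfolding q_def j_def by simp
    have "(m + k + int i) mod 2 = (m + int j) mod 2"
      and "(m + k + int i) div 2 = (m + int j) div 2 + q"
      unfolding sum by simp_all
    moreover have "act k (e # p) = X j h # act q p"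
      using xi_sel by (simp add: q_def j_def)
    ultimately show ?thesis
      using xi_sel j Cons.IH[of "(m + int j) div 2" q] by simp
  qed (use Cons in simp)
qed simp

lemma act_append:
  "\<exists>c. act m (p @ q) = act m p @ act c q \<and> \<bar>c\<bar> \<le> max 1 (\<bar>m\<bar> - int (length p))"
proof (induction p arbitrary: m)
  case (Cons e p)
  show ?case
  proof (cases e rule: H1xi_cases)
    case (xi_sel i h)
    obtain c where c: "act ((m + int i) div 2) (p @ q) = act ((m + int i) div 2) p @ act c q"
      "\<bar>c\<bar> \<le> max 1 (\<bar>(m + int i) div 2\<bar> - int (length p))"
      using Cons.IH by blast
    have "\<bar>(m + int i) div 2\<bar> \<le> max 1 (\<bar>m\<bar> - 1)" using xi_sel(1) by auto
    then have "\<bar>c\<bar> \<le> max 1 (\<bar>m\<bar> - int (length (e # p)))"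
      using c(2) by (simp add: max_def split: if_splits)
    then show ?thesis using xi_sel c(1) by auto
  next
    case other
    then show ?thesis using Cons.IH[of 0] by auto
  qed
qed auto

lemma act_unit_carry_xi_sel:
  assumes "i \<in> {0,1}" "d \<in> {0,1}" "h \<in> H1"
  shows "act (2 * int i - 1) (X d h # p) = X (1 - d) h # act (if d = i then 2 * int i - 1 else 0) p"
proof -
  have "nat ((2 * int i - 1 + int d) mod 2) = 1 - d"
    and "(2 * int i - 1 + int d) div 2 = (if d = i then 2 * int i - 1 else 0)"
    using assms(1,2) by auto
  then show ?thesis using assms by simp
qed

definition maps_tail :: "int \<Rightarrow> int \<Rightarrow> (int \<Rightarrow> 'e) \<Rightarrow> (int \<Rightarrow> 'e) \<Rightarrow> bool" where
  "maps_tail c k mu nu \<longleftrightarrow> act c (map mu [k..-1]) = map nu [k..-1]"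

lemma maps_tail_nonneg: "0 \<le> k \<Longrightarrow> maps_tail c k mu nu"
  by (simp add: maps_tail_def)

lemma maps_tail_zero_iff: "maps_tail 0 k mu nu \<longleftrightarrow> (\<forall>j. k \<le> j \<and> j < 0 \<longrightarrow> mu j = nu j)"
  by (auto simp: maps_tail_def map_eq_conv)

lemma maps_tail_Cons_iff:
  "k < 0 \<Longrightarrow> maps_tail c k mu nu \<longleftrightarrow> act c (mu k # map mu [k+1..-1]) = nu k # map nu [k+1..-1]"
  by (simp add: maps_tail_def upto_rec1[of k])

lemma maps_tail_other_iff:
  assumes "k < 0" "mu k \<notin> HX"
  shows "maps_tail c k mu nu \<longleftrightarrow> nu k = mu k \<and> maps_tail 0 (k + 1) mu nu"
  unfolding maps_tail_Cons_iff[OF assms(1)] using assms(2) by (auto simp: maps_tail_def)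

lemma maps_tail_unit_xi_sel_iff:
  assumes "k < 0" "i \<in> {0,1}" "d \<in> {0,1}" "h \<in> H1" "mu k = X d h"
  shows "maps_tail (2 * int i - 1) k mu nu \<longleftrightarrow>
    nu k = X (1 - d) h \<and> maps_tail (if d = i then 2 * int i - 1 else 0) (k + 1) mu nu"
  unfolding maps_tail_Cons_iff[OF assms(1)] assms(5) act_unit_carry_xi_sel[OF assms(2-4)]
  by (auto simp: maps_tail_def)

definition carry_bounded :: "int \<Rightarrow> (int \<Rightarrow> 'e) \<Rightarrow> (int \<Rightarrow> 'e) \<Rightarrow> bool" where
  "carry_bounded B mu nu \<longleftrightarrow> (\<forall>k<0. \<exists>c. \<bar>c\<bar> \<le> B \<and> maps_tail c k mu nu)"

lemma maps_tail_unit_downward: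
  assumes "maps_tail (2 * int i - 1) n mu nu" "m \<le> n" "i \<in> {0,1}"
    and "\<forall>k<n. \<exists>h\<in>H1. mu k = X i h \<and> nu k = X (1 - i) h"
  shows "maps_tail (2 * int i - 1) m mu nu"
  using assms(2)
proof (induction m rule: int_le_induct)
  case (step k)
  show ?case
  proof (cases "k \<le> 0")
    case True
    obtain h where "h \<in> H1" "mu (k - 1) = X i h" "nu (k - 1) = X (1 - i) h"
      using assms(4) step.hyps by force
    then show ?thesis using step.IH True assms(3) by (simp add: maps_tail_unit_xi_sel_iff)
  qed (simp add: maps_tail_nonneg)
qed (rule assms(1))

lemma xi_rel_imp_carry_bounded:
  assumes "(mu, nu) \<in> xi_rel E1 r s H1 x0e x1e"
  shows "carry_bounded 1 mu nu"
proof (cases "mu = nu")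
  case True
  then show ?thesis
    unfolding carry_bounded_def by (metis abs_zero maps_tail_zero_iff zero_le_one)
next
  case False
  then obtain n i y where n: "n < 0" and i: "i \<in> {0,1}"
    and y: "\<forall>k\<le>n. y k \<in> H1 \<and> mu k = X i (y k) \<and> nu k = X (1 - i) (y k)"
    and top: "n = -1 \<or>
       (n < -1 \<and> (\<forall>j. n + 1 < j \<and> j < 0 \<longrightarrow> mu j = nu j) \<and>
          (\<exists>y'\<in>H1. mu (n+1) = X (1 - i) y' \<and> nu (n+1) = X i y')) \<or>
       (n < -1 \<and> (\<forall>j. n + 1 \<le> j \<and> j < 0 \<longrightarrow> mu j = nu j) \<and> mu (n+1) \<notin> HX)"
    using assms(1) unfolding xi_rel_def by blast
  define c where "c = 2 * int i - 1"
  have above: "\<forall>j. n + 1 < j \<and> j < 0 \<longrightarrow> mu j = nu j"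
    using top by auto
  then have tail_0: "maps_tail 0 (n + 1 + 1) mu nu"
    by (simp add: maps_tail_zero_iff)
  have "maps_tail c (n + 1) mu nu"
    using top
  proof (elim disjE conjE bexE)
    fix y' assume "n < -1" "y' \<in> H1" "mu (n + 1) = X (1 - i) y'" "nu (n + 1) = X i y'"
    moreover have "1 - i \<in> {0,1}" "1 - (1 - i) = i" "1 - i \<noteq> i" using i by auto
    ultimately show ?thesis
      using i tail_0 unfolding c_def by (subst maps_tail_unit_xi_sel_iff) auto
  next
    assume "n < -1" "mu (n + 1) \<notin> HX" "\<forall>j. n + 1 \<le> j \<and> j < 0 \<longrightarrow> mu j = nu j"
    then show ?thesis using tail_0 by (simp add: maps_tail_other_iff)
  qed (simp add: maps_tail_nonneg)
  moreover have "\<forall>k<n + 1. \<exists>h\<in>H1. mu k = X i h \<and> nu k = X (1 - i) h"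
    using y by force
  ultimately have "maps_tail c k mu nu" if "k \<le> n + 1" for k
    using maps_tail_unit_downward i that unfolding c_def by blast
  moreover have "maps_tail 0 k mu nu" if "n + 1 < k" for k
    using above that by (simp add: maps_tail_zero_iff)
  moreover have "\<bar>c\<bar> \<le> 1" "\<bar>0 :: int\<bar> \<le> 1" using i by (auto simp: c_def)
  ultimately show ?thesis
    unfolding carry_bounded_def by (meson not_le)
qed

lemma maps_tail_unit_step:
  assumes "maps_tail (2 * int i - 1) j mu nu" "i \<in> {0,1}" "j < t" "t < 0" "mu t \<noteq> nu t"
  shows "\<exists>h\<in>H1. mu j = X i h \<and> nu j = X (1 - i) h"
    and "maps_tail (2 * int i - 1) (j + 1) mu nu"
proof -
  have no_zero_carry: "\<not> maps_tail 0 (j + 1) mu nu"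
    using assms(3-5) zless_imp_add1_zle[OF assms(3)] unfolding maps_tail_zero_iff by blast
  obtain d h where dh: "d \<in> {0,1}" "h \<in> H1" "mu j = X d h"
  proof (cases "mu j" rule: H1xi_cases)
    case other
    then show ?thesis using assms(1,3,4) no_zero_carry by (simp add: maps_tail_other_iff)
  qed
  have "nu j = X (1 - d) h \<and> maps_tail (if d = i then 2 * int i - 1 else 0) (j + 1) mu nu"
    using maps_tail_unit_xi_sel_iff[where mu = mu and nu = nu, OF _ assms(2) dh] assms(1,3,4) by simp
  with no_zero_carry dh show "\<exists>h\<in>H1. mu j = X i h \<and> nu j = X (1 - i) h"
    and "maps_tail (2 * int i - 1) (j + 1) mu nu"
    by (auto split: if_splits)
qed

lemma maps_tail_unit_upward:
  assumes "maps_tail (2 * int i - 1) k mu nu" "i \<in> {0,1}" "k \<le> j" "j \<le> t" "t < 0" "mu t \<noteq> nu t"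
  shows "maps_tail (2 * int i - 1) j mu nu"
  using assms(3,4)
proof (induction j rule: int_ge_induct)
  case (step j)
  then show ?case using maps_tail_unit_step(2)[where mu = mu and nu = nu, OF _ assms(2) _ assms(5,6)] by simp
qed (rule assms(1))

text \<open>Below the last place where \<open>\<mu>\<close> and \<open>\<nu>\<close> differ, every carry is \<open>\<plusminus>1\<close>,
  and its sign is read off from the bit of \<open>\<mu>\<close> just below that place.\<close>

lemma uniform_odd_carry_below_difference:
  assumes carries: "carry_bounded 1 mu nu" and "t < 0" "mu t \<noteq> nu t"
  obtains i where "i \<in> {0,1}" "\<forall>k\<le>t. maps_tail (2 * int i - 1) k mu nu"
proof -
  have odd_carry: "\<exists>i\<in>{0,1}. maps_tail (2 * int i - 1) k mu nu" if "k \<le> t" for k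
  proof -
    have "k < 0" using that assms(2) by simp
    then obtain c where c: "\<bar>c\<bar> \<le> 1" "maps_tail c k mu nu"
      using carries unfolding carry_bounded_def by blast
    have "c \<noteq> 0" using c(2) that assms(2,3) by (auto simp: maps_tail_zero_iff)
    then have "c = 2 * int 0 - 1 \<or> c = 2 * int 1 - 1" using c(1) by auto
    then show ?thesis using c(2) by blast
  qed
  have "t - 1 \<le> t" by simp
  with odd_carry obtain i where i: "i \<in> {0,1}" "maps_tail (2 * int i - 1) (t - 1) mu nu"
    by blast
  obtain h where h: "h \<in> H1" "mu (t - 1) = X i h"
    using maps_tail_unit_step(1)[where mu = mu and nu = nu, OF i(2,1) _ assms(2,3)] by auto
  have "maps_tail (2 * int i - 1) k mu nu" if "k \<le> t - 1" for k
  proof -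
    have "k \<le> t" using that by simp
    with odd_carry obtain i' where i': "i' \<in> {0,1}" "maps_tail (2 * int i' - 1) k mu nu"
      by blast
    have "maps_tail (2 * int i' - 1) (t - 1) mu nu"
      using maps_tail_unit_upward[OF i'(2,1) that _ assms(2,3)] by simp
    from maps_tail_unit_step(1)[OF this i'(1) _ assms(2,3)]
    obtain h' where "h' \<in> H1" "mu (t - 1) = X i' h'" by auto
    then have "i' = i" using xi_sel_inject[OF i'(1) _ i(1) h(1)] h(2) by simp
    then show ?thesis using i' by simp
  qed
  moreover have "maps_tail (2 * int i - 1) t mu nu"
    using maps_tail_unit_step(2)[where mu = mu and nu = nu, OF i(2,1) _ assms(2,3)] by simp
  moreover have "k \<le> t - 1 \<or> k = t" if "k \<le> t" for k using that by linarith
  ultimately show ?thesis using i(1) that by blast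
qed

lemma unit_carry_changes_H1xi:
  assumes "maps_tail (2 * int i - 1) k mu nu" "i \<in> {0,1}" "k < 0" "mu k \<in> HX"
  shows "nu k \<noteq> mu k"
proof -
  obtain d h where dh: "d \<in> {0,1}" "h \<in> H1" "mu k = X d h"
    using assms(4) by (cases "mu k" rule: H1xi_cases) auto
  then have "nu k = X (1 - d) h"
    using maps_tail_unit_xi_sel_iff[where mu = mu and nu = nu, OF assms(3,2) dh] assms(1) by simp
  moreover have "1 - d \<in> {0,1}" "1 - d \<noteq> d" using dh(1) by auto
  ultimately show ?thesis using xi_sel_inject[of "1 - d" h d h] dh by auto
qed

lemma xi_relI:
  assumes "mu \<in> Eneg E1 r s" "nu \<in> Eneg E1 r s" "n < 0" "i \<in> {0,1}"
    and "\<forall>k\<le>n. y k \<in> H1 \<and> mu k = X i (y k) \<and> nu k = X (1 - i) (y k)"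
    and "n = -1 \<or>
       (n < -1 \<and> (\<forall>j. n + 1 < j \<and> j < 0 \<longrightarrow> mu j = nu j) \<and>
          (\<exists>y'\<in>H1. mu (n+1) = X (1 - i) y' \<and> nu (n+1) = X i y')) \<or>
       (n < -1 \<and> (\<forall>j. n + 1 \<le> j \<and> j < 0 \<longrightarrow> mu j = nu j) \<and> mu (n+1) \<notin> HX)"
  shows "(mu, nu) \<in> xi_rel E1 r s H1 x0e x1e"
  using assms unfolding xi_rel_def by blast

lemma odd_carry_digits_below_difference:
  assumes "\<forall>k\<le>t. maps_tail (2 * int i - 1) k mu nu" "i \<in> {0,1}" "t < 0" "mu t \<noteq> nu t"
  obtains y where "\<forall>k<t. y k \<in> H1 \<and> mu k = X i (y k) \<and> nu k = X (1 - i) (y k)"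
proof
  define y where "y k = (SOME h. h \<in> H1 \<and> mu k = X i h \<and> nu k = X (1 - i) h)" for k
  show "\<forall>k<t. y k \<in> H1 \<and> mu k = X i (y k) \<and> nu k = X (1 - i) (y k)"
  proof (intro allI impI)
    fix k assume "k < t"
    then have "\<exists>h. h \<in> H1 \<and> mu k = X i h \<and> nu k = X (1 - i) h"
      using maps_tail_unit_step(1)[OF assms(1)[rule_format, of k] assms(2) _ assms(3,4)] by auto
    then show "y k \<in> H1 \<and> mu k = X i (y k) \<and> nu k = X (1 - i) (y k)"
      unfolding y_def by (rule someI_ex)
  qed
qed

lemma odd_carry_at_difference:
  assumes "maps_tail (2 * int i - 1) t mu nu" "i \<in> {0,1}" "t < 0" "mu t \<noteq> nu t"
  obtains (absorbed) h where "h \<in> H1" "mu t = X (1 - i) h" "nu t = X i h"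
    | (passed) h where "h \<in> H1" "mu t = X i h" "nu t = X (1 - i) h"
      "maps_tail (2 * int i - 1) (t + 1) mu nu"
proof -
  obtain d h where dh: "d \<in> {0,1}" "h \<in> H1" "mu t = X d h"
  proof (cases "mu t" rule: H1xi_cases)
    case other
    then show ?thesis using assms by (auto simp: maps_tail_other_iff)
  qed
  have "nu t = X (1 - d) h" "maps_tail (if d = i then 2 * int i - 1 else 0) (t + 1) mu nu"
    using maps_tail_unit_xi_sel_iff[where mu = mu and nu = nu, OF assms(3,2) dh] assms(1)
    by simp_all
  then show ?thesis
    using dh assms(2) absorbed passed by (cases "d = i") auto
qed

lemma carry_bounded_1_imp_xi_rel:
  assumes "mu \<in> Eneg E1 r s" "nu \<in> Eneg E1 r s" and carries: "carry_bounded 1 mu nu"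
  shows "(mu, nu) \<in> xi_rel E1 r s H1 x0e x1e"
proof (cases "mu = nu")
  case True
  then show ?thesis using assms(1,2) by (simp add: xi_rel_def)
next
  case False
  moreover have "\<forall>k\<ge>0. mu k = nu k" using assms(1,2) by (simp add: Eneg_def)
  ultimately obtain t where t: "t < 0" "mu t \<noteq> nu t" "\<forall>j>t. mu j = nu j"
    by (rule last_difference)
  obtain i where i: "i \<in> {0,1}" and below: "\<forall>k\<le>t. maps_tail (2 * int i - 1) k mu nu"
    using uniform_odd_carry_below_difference[OF carries t(1,2)] by blast
  obtain y where y: "\<forall>k<t. y k \<in> H1 \<and> mu k = X i (y k) \<and> nu k = X (1 - i) (y k)"
    using odd_carry_digits_below_difference[OF below i t(1,2)] by blast
  have "maps_tail (2 * int i - 1) t mu nu" using below by simp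
  from this i t(1,2) show ?thesis
  proof (cases rule: odd_carry_at_difference)
    case (absorbed h)
    show ?thesis
    proof (rule xi_relI[OF assms(1,2) _ i, where n = "t - 1" and y = y])
      show "\<forall>k\<le>t - 1. y k \<in> H1 \<and> mu k = X i (y k) \<and> nu k = X (1 - i) (y k)"
        using y by simp
      show "t - 1 = -1 \<or>
        (t - 1 < -1 \<and> (\<forall>j. t - 1 + 1 < j \<and> j < 0 \<longrightarrow> mu j = nu j) \<and>
          (\<exists>y'\<in>H1. mu (t - 1 + 1) = X (1 - i) y' \<and> nu (t - 1 + 1) = X i y')) \<or>
        (t - 1 < -1 \<and> (\<forall>j. t - 1 + 1 \<le> j \<and> j < 0 \<longrightarrow> mu j = nu j) \<and> mu (t - 1 + 1) \<notin> HX)"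
        using absorbed t(1,3) by auto
    qed (use t(1) in simp)
  next
    case (passed h)
    show ?thesis
    proof (rule xi_relI[OF assms(1,2) t(1) i, where y = "y(t := h)"])
      show "\<forall>k\<le>t. (y(t := h)) k \<in> H1 \<and> mu k = X i ((y(t := h)) k) \<and>
          nu k = X (1 - i) ((y(t := h)) k)"
        using y passed by (auto simp: le_less)
      have "mu (t + 1) \<notin> HX" if "t \<noteq> -1"
        using unit_carry_changes_H1xi[OF passed(4) i] t(1,3) that by auto
      then show "t = -1 \<or>
        (t < -1 \<and> (\<forall>j. t + 1 < j \<and> j < 0 \<longrightarrow> mu j = nu j) \<and>
          (\<exists>y'\<in>H1. mu (t + 1) = X (1 - i) y' \<and> nu (t + 1) = X i y')) \<or>
        (t < -1 \<and> (\<forall>j. t + 1 \<le> j \<and> j < 0 \<longrightarrow> mu j = nu j) \<and> mu (t + 1) \<notin> HX)"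
        using t(1,3) by auto
    qed
  qed
qed

lemma maps_tail_decay:
  assumes "maps_tail m l mu nu" "l \<le> k" "k < 0"
  shows "\<exists>c. \<bar>c\<bar> \<le> max 1 (\<bar>m\<bar> - (k - l)) \<and> maps_tail c k mu nu"
proof -
  obtain c where c:
    "act m (map mu [l..k-1] @ map mu [k..-1]) = act m (map mu [l..k-1]) @ act c (map mu [k..-1])"
    "\<bar>c\<bar> \<le> max 1 (\<bar>m\<bar> - int (length (map mu [l..k-1])))"
    using act_append by blast
  have "[l..-1] = [l..k-1] @ [k..-1]" using assms(2,3) by (simp add: upto_split1)
  then have "act m (map mu [l..k-1]) @ act c (map mu [k..-1]) = map nu [l..k-1] @ map nu [k..-1]"
    using assms(1) c(1) by (simp add: maps_tail_def)
  then have "maps_tail c k mu nu" by (simp add: maps_tail_def append_eq_append_conv)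
  moreover have "int (length (map mu [l..k-1])) = k - l" using assms(2) by simp
  ultimately show ?thesis using c(2) by auto
qed

lemma carry_bounded_imp_carry_bounded_1:
  assumes carries: "carry_bounded B mu nu"
  shows "carry_bounded 1 mu nu"
  unfolding carry_bounded_def
proof (intro allI impI)
  fix k :: int assume "k < 0"
  obtain c0 where "\<bar>c0\<bar> \<le> B" using carries \<open>k < 0\<close> unfolding carry_bounded_def by blast
  then have "0 \<le> B" by (meson abs_ge_zero order_trans)
  then have "k - B \<le> k" "k - B < 0" using \<open>k < 0\<close> by simp_all
  then obtain m where m: "\<bar>m\<bar> \<le> B" "maps_tail m (k - B) mu nu"
    using carries unfolding carry_bounded_def by blast
  from maps_tail_decay[OF m(2) \<open>k - B \<le> k\<close> \<open>k < 0\<close>]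
  obtain c where "\<bar>c\<bar> \<le> max 1 (\<bar>m\<bar> - (k - (k - B)))" "maps_tail c k mu nu" by blast
  then show "\<exists>c. \<bar>c\<bar> \<le> 1 \<and> maps_tail c k mu nu" using m(1) by auto
qed

lemma Gxi_class_representative:
  assumes "v \<in> E0"
  obtains k where "(SOME g. g \<in> Gxi_class E0 E1 r s H1 x0e x1e (m, v)) = (m + k, v)"
    and "(k, v) \<in> triv_elems E0 E1 r s H1 x0e x1e"
proof -
  have "(0, v) \<in> triv_elems E0 E1 r s H1 x0e x1e"
    using assms by (simp add: triv_elems_def path_act_eq_act)
  then have "(m, v) \<in> Gxi_class E0 E1 r s H1 x0e x1e (m, v)"
    unfolding Gxi_class_def by force
  then have "(SOME g. g \<in> Gxi_class E0 E1 r s H1 x0e x1e (m, v))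
      \<in> Gxi_class E0 E1 r s H1 x0e x1e (m, v)"
    by (rule someI)
  then show ?thesis using that unfolding Gxi_class_def by auto
qed

lemma Gxi_dom_class:
  assumes "v \<in> E0"
  shows "Gxi_dom (Gxi_class E0 E1 r s H1 x0e x1e (m, v)) = v"
proof -
  obtain k where "(SOME g. g \<in> Gxi_class E0 E1 r s H1 x0e x1e (m, v)) = (m + k, v)"
    using Gxi_class_representative[OF assms] by blast
  then show ?thesis unfolding Gxi_dom_def by simp
qed

lemma Gxi_act_class:
  assumes "v \<in> E0" "fpath E1 r s p" "p \<noteq> []" "r (hd p) = v"
  shows "Gxi_act H1 x0e x1e s (Gxi_class E0 E1 r s H1 x0e x1e (m, v)) p = act m p"
proof -
  obtain k where k: "(SOME g. g \<in> Gxi_class E0 E1 r s H1 x0e x1e (m, v)) = (m + k, v)"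
    "(k, v) \<in> triv_elems E0 E1 r s H1 x0e x1e"
    using Gxi_class_representative[OF assms(1)] by blast
  from k(2) have "act k p = p"
    using assms(2-4) by (auto simp: triv_elems_def path_act_eq_act)
  then show ?thesis
    unfolding Gxi_act_def k(1) path_act_eq_act by (simp add: act_add)
qed

lemma ae_rel_imp_carry_bounded:
  assumes "(mu, nu) \<in> ae_rel E0 E1 r s H1 x0e x1e"
  shows "\<exists>B. carry_bounded B mu nu"
proof -
  obtain F g where F: "finite F" and g: "\<forall>n<0. g n \<in> F \<and>
      Gxi_act H1 x0e x1e s (g n) (map mu [n..-1]) = map nu [n..-1]"
    using assms unfolding ae_rel_def by blast
  define carry where "carry C = fst (SOME g. g \<in> C)" for C :: "(int \<times> 'v) set"
  have "\<bar>carry (g n)\<bar> \<le> Max ((\<lambda>C. \<bar>carry C\<bar>) ` F) \<and> maps_tail (carry (g n)) n mu nu"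
    if "n < 0" for n
    using g that F by (auto simp: maps_tail_def carry_def Gxi_act_def path_act_eq_act)
  then show ?thesis unfolding carry_bounded_def by blast
qed

lemma carry_bounded_imp_ae_rel:
  assumes "finite E0" "\<forall>e\<in>E1. r e \<in> E0" "mu \<in> Eneg E1 r s" "nu \<in> Eneg E1 r s"
    and "carry_bounded B mu nu"
  shows "(mu, nu) \<in> ae_rel E0 E1 r s H1 x0e x1e"
proof -
  obtain c where c: "\<forall>n<0. \<bar>c n\<bar> \<le> B \<and> maps_tail (c n) n mu nu"
    using assms(5) unfolding carry_bounded_def by metis
  define F where "F = Gxi_class E0 E1 r s H1 x0e x1e ` ({-B..B} \<times> E0)"
  define g where "g n = Gxi_class E0 E1 r s H1 x0e x1e (c n, r (mu n))" for n
  have "F \<subseteq> Gxi E0 E1 r s H1 x0e x1e" "finite F"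
    using assms(1) by (auto simp: F_def Gxi_def)
  moreover have "g n \<in> F \<and> Gxi_dom (g n) = r (mu n) \<and>
      Gxi_act H1 x0e x1e s (g n) (map mu [n..-1]) = map nu [n..-1]" if "n < 0" for n
  proof -
    have v: "r (mu n) \<in> E0" using assms(2,3) that by (simp add: Eneg_def)
    moreover have "c n \<in> {-B..B}" using c that by (auto simp: abs_le_iff)
    ultimately have "g n \<in> F" unfolding F_def g_def by blast
    moreover have "map mu [n..-1] \<noteq> []" "r (hd (map mu [n..-1])) = r (mu n)"
      using that by (simp_all add: upto_rec1)
    ultimately show ?thesis
      using v c that Eneg_tail_fpath[OF assms(3)]
      by (simp add: g_def Gxi_dom_class Gxi_act_class maps_tail_def)
  qed
  ultimately show ?thesis
    unfolding ae_rel_def using assms(3,4) by blast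
qed

lemma xi_rel_eq_ae_rel:
  assumes "finite E0" "\<forall>e\<in>E1. r e \<in> E0"
  shows "xi_rel E1 r s H1 x0e x1e = ae_rel E0 E1 r s H1 x0e x1e"
proof -
  have "(mu, nu) \<in> xi_rel E1 r s H1 x0e x1e \<longleftrightarrow> (mu, nu) \<in> ae_rel E0 E1 r s H1 x0e x1e" for mu nu
  proof
    assume xi: "(mu, nu) \<in> xi_rel E1 r s H1 x0e x1e"
    then have "mu \<in> Eneg E1 r s" "nu \<in> Eneg E1 r s" by (simp_all add: xi_rel_def)
    moreover have "carry_bounded 1 mu nu" using xi by (rule xi_rel_imp_carry_bounded)
    ultimately show "(mu, nu) \<in> ae_rel E0 E1 r s H1 x0e x1e"
      by (rule carry_bounded_imp_ae_rel[OF assms])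
  next
    assume ae: "(mu, nu) \<in> ae_rel E0 E1 r s H1 x0e x1e"
    then have "mu \<in> Eneg E1 r s" "nu \<in> Eneg E1 r s" by (simp_all add: ae_rel_def)
    moreover obtain B where "carry_bounded B mu nu"
      using ae_rel_imp_carry_bounded[OF ae] by blast
    then have "carry_bounded 1 mu nu" by (rule carry_bounded_imp_carry_bounded_1)
    ultimately show "(mu, nu) \<in> xi_rel E1 r s H1 x0e x1e"
      by (rule carry_bounded_1_imp_xi_rel)
  qed
  then show ?thesis by (simp add: set_eq_iff split_paired_all)
qed

end

theorem theorem4p1:
  fixes E0 :: "'v set" and E1 :: "'e set" and r s :: "'e \<Rightarrow> 'v"
    and H0 :: "'w set" and H1 :: "'f set" and rH sH :: "'f \<Rightarrow> 'w"
    and x0v x1v :: "'w \<Rightarrow> 'v" and x0e x1e :: "'f \<Rightarrow> 'e"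
  assumes "finite_dgraph E0 E1 r s"
    and "finite_dgraph H0 H1 rH sH"
    and "embedding_pair H0 H1 rH sH E0 E1 r s x0v x0e x1v x1e"
  shows "xi_rel E1 r s H1 x0e x1e = ae_rel E0 E1 r s H1 x0e x1e
       \<and> Eneg E1 r s // xi_rel E1 r s H1 x0e x1e = Eneg E1 r s // ae_rel E0 E1 r s H1 x0e x1e"
proof -
  interpret edge_embedding_pair H1 x0e x1e s
    using assms(3) unfolding embedding_pair_def inj_graph_hom_def by unfold_locales auto
  have "finite E0" "\<forall>e\<in>E1. r e \<in> E0"
    using assms(1) by (auto simp: finite_dgraph_def dgraph_def)
  then have "xi_rel E1 r s H1 x0e x1e = ae_rel E0 E1 r s H1 x0e x1e"
    by (rule xi_rel_eq_ae_rel)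
  then show ?thesis by simp
qed

end
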